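(* Fix a positive $\epsilon\in\Gamma$. Let $d_0\in\mathrm{Der}_0(\mathfrak{L},\mathfrak{V})$ satisfy $d_0(L_{k\epsilon})=0$ for all $k\in\mathbb{Z}$. Then $d_0(A_p)=0$ whenever $A\in\{L,I\}$ and $p\in\Gamma$, or $A\in\{G,H\}$ and $p\in s+\Gamma$. In particular $d_0=0$.
   Context: Let $\Gamma$ be a nontrivial additive subgroup of $\mathbb{R}$, and let $s\in\mathbb{R}$ with $2s\in\Gamma$. The Lie superalgebra $\mathfrak{L}$ over $\mathbb{C}$ has basis $\{L_p,I_p,G_r,H_r\mid p\in\Gamma,\ r\in s+\Gamma\}$. Here $L_p,I_p$ are even and $G_r,H_r$ are odd. The nonzero super-brackets are $[L_p,L_q]=(p-q)L_{p+q}$, $[L_p,I_q]=(p-q)I_{p+q}$, $[L_p,G_r]=(\tfrac p2-r)G_{p+r}$, $[L_p,H_r]=(\tfrac p2-r)H_{p+r}$, $[G_r,G_t]=I_{r+t}$, $[I_p,G_r]=(p-2r)H_{p+r}$. All other brackets of basis elements vanish, apart from those forced by super-antisymmetry. Grading: - $\mathbb{Z}_s=\Gamma\cup(s+\Gamma)$, an additive subgroup of $\mathbb{R}$. - $\mathfrak{L}=\bigoplus_{p\in\mathbb{Z}_s}\mathfrak{L}_p$, where $\mathfrak{L}_p$ is spanned by those of $L_p,I_p,G_p,H_p$ that exist. - $\mathfrak{V}=\mathfrak{L}\otimes\mathfrak{L}$, with $\mathfrak{V}_r=\bigoplus_{p+q=r}\mathfrak{L}_p\otimes\mathfrak{L}_q$.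 - $\mathfrak{L}$ acts on $\mathfrak{V}$ by $x\circ(a\otimes b)=[x,a]\otimes b+(-1)^{[x][a]}a\otimes[x,b]$, where $[x]$ is parity. Derivations: - A homogeneous derivation of parity $[d]$ is a linear map $d:\mathfrak{L}\to\mathfrak{V}$ shifting parity by $[d]$ and satisfying $d([x,y])=(-1)^{[d][x]}x\circ d(y)-(-1)^{[y]([d]+[x])}y\circ d(x)$. - A derivation is a sum of an even and an odd one. - $\mathrm{Der}_0(\mathfrak{L},\mathfrak{V})$ is the set of derivations $d$ with $d(\mathfrak{L}_p)\subset\mathfrak{V}_{p}$ for all $p\in\mathbb{Z}_s$. *)

theory Defs
  imports Complex_Main
begin

text \<open>Basis symbols of the Lie superalgebra: L p, I p (even), G r, H r (odd).\<close>
datatype gen = L real | I real | G real | H real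

definition nontriv_subgroup :: "real set \<Rightarrow> bool" where
  "nontriv_subgroup Gam \<longleftrightarrow> 0 \<in> Gam \<and> (\<forall>x\<in>Gam. \<forall>y\<in>Gam. x + y \<in> Gam)
     \<and> (\<forall>x\<in>Gam. - x \<in> Gam) \<and> Gam \<noteq> {0}"

fun is_basis :: "real set \<Rightarrow> real \<Rightarrow> gen \<Rightarrow> bool" where
  "is_basis Gam s (L p) = (p \<in> Gam)"
| "is_basis Gam s (I p) = (p \<in> Gam)"
| "is_basis Gam s (G r) = (r - s \<in> Gam)"
| "is_basis Gam s (H r) = (r - s \<in> Gam)"

fun par :: "gen \<Rightarrow> nat" where
  "par (L _) = 0" | "par (I _) = 0" | "par (G _) = 1" | "par (H _) = 1"

fun deg :: "gen \<Rightarrow> real" where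
  "deg (L p) = p" | "deg (I p) = p" | "deg (G p) = p" | "deg (H p) = p"

text \<open>Elements of the algebra and of the tensor square, as coefficient functions.\<close>
type_synonym elt = "gen \<Rightarrow> complex"
type_synonym velt = "gen \<times> gen \<Rightarrow> complex"

definition supp :: "('a \<Rightarrow> complex) \<Rightarrow> 'a set" where
  "supp x = {b. x b \<noteq> 0}"

definition Lsp :: "real set \<Rightarrow> real \<Rightarrow> elt set" where
  "Lsp Gam s = {x. finite (supp x) \<and> (\<forall>b\<in>supp x. is_basis Gam s b)}"

definition Vsp :: "real set \<Rightarrow> real \<Rightarrow> velt set" where
  "Vsp Gam s = {v. finite (supp v) \<and> (\<forall>(a,b)\<in>supp v. is_basis Gam s a \<and> is_basis Gam s b)}"

definition sc :: "complex \<Rightarrow> 'a \<Rightarrow> 'a \<Rightarrow> complex" where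
  "sc c g = (\<lambda>h. if h = g then c else 0)"

text \<open>Super-bracket of basis elements (including those forced by super-antisymmetry).\<close>
fun bb :: "gen \<Rightarrow> gen \<Rightarrow> elt" where
  "bb (L p) (L q) = sc (of_real (p - q)) (L (p + q))"
| "bb (L p) (I q) = sc (of_real (p - q)) (I (p + q))"
| "bb (I q) (L p) = sc (- of_real (p - q)) (I (p + q))"
| "bb (L p) (G r) = sc (of_real (p / 2 - r)) (G (p + r))"
| "bb (G r) (L p) = sc (- of_real (p / 2 - r)) (G (p + r))"
| "bb (L p) (H r) = sc (of_real (p / 2 - r)) (H (p + r))"
| "bb (H r) (L p) = sc (- of_real (p / 2 - r)) (H (p + r))"
| "bb (G r) (G t) = sc 1 (I (r + t))"
| "bb (I p) (G r) = sc (of_real (p - 2 * r)) (H (p + r))"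
| "bb (G r) (I p) = sc (- of_real (p - 2 * r)) (H (p + r))"
| "bb _ _ = (\<lambda>_. 0)"

definition brk :: "elt \<Rightarrow> elt \<Rightarrow> elt" where
  "brk x y = (\<lambda>h. \<Sum>b\<in>supp x. \<Sum>c\<in>supp y. x b * y c * bb b c h)"

definition tens :: "elt \<Rightarrow> elt \<Rightarrow> velt" where
  "tens u w = (\<lambda>(g, h). u g * w h)"

definition sgn1 :: "nat \<Rightarrow> complex" where
  "sgn1 n = (-1) ^ n"

definition actb :: "gen \<Rightarrow> gen \<Rightarrow> gen \<Rightarrow> velt" where
  "actb x a b = (\<lambda>z. tens (bb x a) (sc 1 b) z + sgn1 (par x * par a) * tens (sc 1 a) (bb x b) z)"

definition act :: "elt \<Rightarrow> velt \<Rightarrow> velt" where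
  "act x v = (\<lambda>z. \<Sum>c\<in>supp x. \<Sum>q\<in>supp v. x c * v q * actb c (fst q) (snd q) z)"

definition Lhom :: "elt \<Rightarrow> nat \<Rightarrow> bool" where
  "Lhom x p \<longleftrightarrow> (\<forall>b\<in>supp x. par b = p)"

definition Vhom :: "velt \<Rightarrow> nat \<Rightarrow> bool" where
  "Vhom v p \<longleftrightarrow> (\<forall>(a,b)\<in>supp v. (par a + par b) mod 2 = p)"

text \<open>Homogeneous derivation of parity e (e = 0 even, e = 1 odd): a linear map
  L \<rightarrow> V shifting parity by e and satisfying the super-Leibniz rule on homogeneous elements.\<close>
definition hom_der :: "real set \<Rightarrow> real \<Rightarrow> nat \<Rightarrow> (elt \<Rightarrow> velt) \<Rightarrow> bool" where
  "hom_der Gam s e d \<longleftrightarrow>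
     (\<forall>x\<in>Lsp Gam s. d x \<in> Vsp Gam s)
   \<and> (\<forall>x\<in>Lsp Gam s. \<forall>y\<in>Lsp Gam s. d (\<lambda>b. x b + y b) = (\<lambda>z. d x z + d y z))
   \<and> (\<forall>c. \<forall>x\<in>Lsp Gam s. d (\<lambda>b. c * x b) = (\<lambda>z. c * d x z))
   \<and> (\<forall>x\<in>Lsp Gam s. \<forall>p<2. Lhom x p \<longrightarrow> Vhom (d x) ((p + e) mod 2))
   \<and> (\<forall>x\<in>Lsp Gam s. \<forall>y\<in>Lsp Gam s. \<forall>px<2. \<forall>py<2. Lhom x px \<longrightarrow> Lhom y py \<longrightarrow>
        d (brk x y) = (\<lambda>z. sgn1 (e * px) * act x (d y) z - sgn1 (py * (e + px)) * act y (d x) z))"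

definition is_der :: "real set \<Rightarrow> real \<Rightarrow> (elt \<Rightarrow> velt) \<Rightarrow> bool" where
  "is_der Gam s d \<longleftrightarrow> (\<exists>d1 d2. hom_der Gam s 0 d1 \<and> hom_der Gam s 1 d2
      \<and> (\<forall>x\<in>Lsp Gam s. d x = (\<lambda>z. d1 x z + d2 x z)))"

definition Der0 :: "real set \<Rightarrow> real \<Rightarrow> (elt \<Rightarrow> velt) set" where
  "Der0 Gam s = {d. is_der Gam s d \<and>
     (\<forall>p. \<forall>x\<in>Lsp Gam s. (\<forall>b\<in>supp x. deg b = p) \<longrightarrow>
         (\<forall>(a,b)\<in>supp (d x). deg a + deg b = p))}"

end

theory Submission
  imports Defs "HOL-Computational_Algebra.Polynomial"
begin

text \<open>Write \<open>[L\<^sub>m, Y] = (w(Y) m - deg Y) Y'\<close> with \<open>Y'\<close> the basis element of the same type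
  shifted by \<open>m\<close> and \<open>w(Y) \<in> {1, 1/2}\<close> its weight. If \<open>d\<close> kills \<open>L\<^sub>m\<close>, the Leibniz rule reduces to
  \<open>d([L\<^sub>m, Y]) = L\<^sub>m \<circ> d(Y)\<close>, a linear relation between coordinates of \<open>d(Y')\<close> and of \<open>d(Y)\<close>.
  Going up from \<open>X\<close> with \<open>L\<^sub>m\<close> and back down with \<open>L\<^sub>-\<^sub>m\<close> gives \<open>Q(m) d(X)(a,b) = 0\<close>, provided
  \<open>d(X)\<close> vanishes at \<open>(a+m, b-m)\<close> and \<open>(a-m, b+m)\<close>; here \<open>Q\<close> is a quadratic in \<open>m\<close> with leading
  coefficient \<open>w(a)(w(a)+1) + w(b)(w(b)+1) - w(X)(w(X)+1) \<noteq> 0\<close>. As \<open>d(X)\<close> has finite support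
  and \<open>Q\<close> finitely many roots, some \<open>m = k\<epsilon>\<close> avoids all obstructions, so every coordinate of
  \<open>d(X)\<close> vanishes.\<close>

fun shift :: "real \<Rightarrow> gen \<Rightarrow> gen" where
  "shift m (L p) = L (m + p)" | "shift m (I p) = I (m + p)"
| "shift m (G p) = G (m + p)" | "shift m (H p) = H (m + p)"

fun weight :: "gen \<Rightarrow> real" where
  "weight (L _) = 1" | "weight (I _) = 1" | "weight (G _) = 1/2" | "weight (H _) = 1/2"

definition Lcoef :: "real \<Rightarrow> gen \<Rightarrow> real" where
  "Lcoef m Y = weight Y * m - deg Y"

text \<open>The \<open>Q(m)\<close> above: the round trip \<open>X \<rightarrow> X' \<rightarrow> X\<close> minus the round trips of the two
  tensor factors \<open>a\<close> and \<open>b\<close>.\<close>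
definition cross_coef :: "gen \<Rightarrow> gen \<Rightarrow> gen \<Rightarrow> real \<Rightarrow> real" where
  "cross_coef X a b m = Lcoef m X * Lcoef (- m) (shift m X)
     - Lcoef (- m) (shift m a) * Lcoef m a - Lcoef (- m) (shift m b) * Lcoef m b"

lemma shift_shift [simp]: "shift a (shift b Y) = shift (a + b) Y"
  by (cases Y) (simp_all add: algebra_simps)

lemma shift_0 [simp]: "shift 0 Y = Y"
  by (cases Y) simp_all

lemma deg_shift [simp]: "deg (shift m Y) = m + deg Y"
  by (cases Y) simp_all

lemma weight_shift [simp]: "weight (shift m Y) = weight Y"
  by (cases Y) simp_all

lemma is_basis_shift:
  assumes "nontriv_subgroup Gam" "is_basis Gam s Y" "m \<in> Gam"
  shows "is_basis Gam s (shift m Y)"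
  using assms by (cases Y) (auto simp: nontriv_subgroup_def add_diff_eq[symmetric])

lemma inj_shift_fst: "inj (\<lambda>m. (shift m a, f m))"
  by (rule injI) (metis add_right_cancel deg_shift prod.inject)

lemma inj_shift_snd: "inj (\<lambda>m. (f m, shift m b))"
  by (rule injI) (metis add_right_cancel deg_shift prod.inject)

lemma bb_L: "bb (L m) Y = sc (of_real (Lcoef m Y)) (shift m Y)"
  by (cases Y) (simp_all add: Lcoef_def)

lemma Lcoef_up_down:
  "Lcoef (- m) (shift m Y) * Lcoef m Y
     = - (weight Y * (weight Y + 1)) * m\<^sup>2 + deg Y * m + (deg Y)\<^sup>2"
  by (simp add: Lcoef_def algebra_simps power2_eq_square)

lemma cross_coef_poly:
  "cross_coef X a b m = poly [:(deg X)\<^sup>2 - (deg a)\<^sup>2 - (deg b)\<^sup>2, deg X - deg a - deg b,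
      weight a * (weight a + 1) + weight b * (weight b + 1) - weight X * (weight X + 1):] m"
  unfolding cross_coef_def mult.commute[of "Lcoef m X"] Lcoef_up_down
  by (simp add: algebra_simps power2_eq_square)

lemma weight_cases: "weight Y * (weight Y + 1) = 2 \<or> weight Y * (weight Y + 1) = 3/4"
  by (cases Y) simp_all

lemma finite_cross_coef_roots: "finite {m. cross_coef X a b m = 0}"
proof -
  have "weight a * (weight a + 1) + weight b * (weight b + 1) - weight X * (weight X + 1) \<noteq> 0"
    using weight_cases[of a] weight_cases[of b] weight_cases[of X] by auto
  then show ?thesis
    unfolding cross_coef_poly by (intro poly_roots_finite) simp
qed

lemma nontriv_subgroup_int_mult:
  assumes "nontriv_subgroup Gam" "\<epsilon> \<in> Gam"
  shows "of_int k * \<epsilon> \<in> Gam"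
proof -
  have G: "0 \<in> Gam" "\<And>x y. x \<in> Gam \<Longrightarrow> y \<in> Gam \<Longrightarrow> x + y \<in> Gam" "\<And>x. x \<in> Gam \<Longrightarrow> - x \<in> Gam"
    using assms(1) unfolding nontriv_subgroup_def by auto
  have nat: "of_nat n * \<epsilon> \<in> Gam" for n
    by (induction n) (use G assms(2) in \<open>auto simp: algebra_simps\<close>)
  show ?thesis
  proof (cases "k \<ge> 0")
    case True
    then show ?thesis using nat[of "nat k"] by simp
  next
    case False
    then show ?thesis using G(3)[OF nat[of "nat (- k)"]] by simp
  qed
qed

lemma ex_int_mult_notin:
  assumes "finite B" "\<epsilon> \<noteq> (0::real)"
  shows "\<exists>k::int. of_int k * \<epsilon> \<notin> B"
proof -
  have "inj (\<lambda>k::int. of_int k * \<epsilon>)"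
    using assms(2) by (auto intro: injI)
  then have "infinite (range (\<lambda>k::int. of_int k * \<epsilon>))"
    using infinite_UNIV_int by (auto dest: finite_imageD)
  then have "\<not> range (\<lambda>k::int. of_int k * \<epsilon>) \<subseteq> B"
    using assms(1) by (auto dest: finite_subset)
  then show ?thesis
    by auto
qed

lemma supp_sc1 [simp]: "supp (sc 1 g) = {g}"
  by (auto simp: supp_def sc_def)

lemma sc1_self [simp]: "sc 1 g g = 1"
  by (simp add: sc_def)

lemma brk_sc1: "brk (sc 1 x) (sc 1 y) = bb x y"
  by (simp add: brk_def)

lemma sc_in_Lsp: "is_basis Gam s Y \<Longrightarrow> sc c Y \<in> Lsp Gam s"
  by (auto simp: Lsp_def supp_def sc_def)

lemma supp_add: "supp (\<lambda>b. x b + y b) \<subseteq> supp x \<union> supp y"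
  by (auto simp: supp_def)

lemma Lsp_add: "x \<in> Lsp Gam s \<Longrightarrow> y \<in> Lsp Gam s \<Longrightarrow> (\<lambda>b. x b + y b) \<in> Lsp Gam s"
  unfolding Lsp_def using supp_add[of x y] by (auto intro: finite_subset)

lemma Lsp_smult: "x \<in> Lsp Gam s \<Longrightarrow> (\<lambda>b. c * x b) \<in> Lsp Gam s"
  unfolding Lsp_def supp_def by (auto elim: finite_subset[rotated])

lemma actb_L:
  "actb (L m) a b (x, y) =
     (if (a, b) = (shift (- m) x, y) then of_real (Lcoef m a) else 0)
   + (if (a, b) = (x, shift (- m) y) then of_real (Lcoef m b) else 0)"
proof -
  have "(x = shift m a \<and> y = b) \<longleftrightarrow> (a, b) = (shift (- m) x, y)"
       "(x = a \<and> y = shift m b) \<longleftrightarrow> (a, b) = (x, shift (- m) y)"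
    by auto
  moreover have "actb (L m) a b (x, y) =
      (if x = shift m a \<and> y = b then of_real (Lcoef m a) else 0)
    + (if x = a \<and> y = shift m b then of_real (Lcoef m b) else 0)"
    unfolding actb_def tens_def bb_L sgn1_def by (simp add: sc_def)
  ultimately show ?thesis
    by (simp only:)
qed

lemma act_L:
  assumes "finite (supp v)"
  shows "act (sc 1 (L m)) v (x, y) =
     of_real (Lcoef m (shift (- m) x)) * v (shift (- m) x, y)
   + of_real (Lcoef m (shift (- m) y)) * v (x, shift (- m) y)"
proof -
  have "act (sc 1 (L m)) v (x, y)
      = (\<Sum>q\<in>supp v. if q = (shift (- m) x, y) then v q * of_real (Lcoef m (fst q)) else 0)
      + (\<Sum>q\<in>supp v. if q = (x, shift (- m) y) then v q * of_real (Lcoef m (snd q)) else 0)"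
    unfolding sum.distrib[symmetric] by (simp add: act_def) (auto simp: actb_L distrib_left intro: sum.cong)
  then show ?thesis
    using assms by (auto simp: supp_def)
qed

lemma act_zero: "act y (\<lambda>_. 0) = (\<lambda>_. 0)"
  by (simp add: act_def supp_def)

lemma Vhom_sum_zero:
  assumes "Vhom u 0" "Vhom w 1" "(\<lambda>z. u z + w z) = (\<lambda>_. 0)"
  shows "u = (\<lambda>_. 0)" "w = (\<lambda>_. 0)"
proof -
  have "u z = 0 \<and> w z = 0" for z
  proof (cases z)
    case (Pair a b)
    have "u z = - w z"
      using fun_cong[OF assms(3), of z] by (simp add: eq_neg_iff_add_eq_0)
    moreover have "u z = 0 \<or> w z = 0"
      using assms(1,2) Pair unfolding Vhom_def supp_def by fastforce
    ultimately show ?thesis by auto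
  qed
  then show "u = (\<lambda>_. 0)" "w = (\<lambda>_. 0)" by auto
qed

lemma cross_cancel:
  fixes v :: "'a::comm_ring"
  assumes "c' * v = p * wa + q * wb" "c * wa = p' * v" "c * wb = q' * v"
  shows "(c * c' - p * p' - q * q') * v = 0"
proof -
  have "(c * c' - p * p' - q * q') * v = c * (c' * v) - p * (p' * v) - q * (q' * v)"
    by (simp add: algebra_simps)
  also have "\<dots> = 0"
    unfolding assms(1) assms(2,3)[symmetric] by (simp add: algebra_simps)
  finally show ?thesis .
qed

lemma hom_der_finite_supp:
  assumes "hom_der Gam s e d" "x \<in> Lsp Gam s"
  shows "finite (supp (d x))"
  using assms unfolding hom_der_def Vsp_def by blast

lemma hom_der_Vhom:
  assumes "hom_der Gam s e d" "x \<in> Lsp Gam s" "Lhom x p" "p < 2"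
  shows "Vhom (d x) ((p + e) mod 2)"
  using assms unfolding hom_der_def by blast

lemma hom_der_bracket_annihilated:
  assumes "hom_der Gam s e d" "x \<in> Lsp Gam s" "y \<in> Lsp Gam s"
    and "Lhom x 0" "Lhom y py" "py < 2" "d x = (\<lambda>_. 0)"
  shows "d (brk x y) = act x (d y)"
proof -
  have "\<forall>x\<in>Lsp Gam s. \<forall>y\<in>Lsp Gam s. \<forall>px<2. \<forall>py<2. Lhom x px \<longrightarrow> Lhom y py \<longrightarrow>
      d (brk x y) = (\<lambda>z. sgn1 (e * px) * act x (d y) z - sgn1 (py * (e + px)) * act y (d x) z)"
    using assms(1) unfolding hom_der_def by blast
  from this[rule_format, of x y 0 py] show ?thesis
    using assms(2-7) by (simp add: act_zero sgn1_def)
qed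

lemma is_der_add:
  assumes "is_der Gam s d" "x \<in> Lsp Gam s" "y \<in> Lsp Gam s"
  shows "d (\<lambda>b. x b + y b) = (\<lambda>z. d x z + d y z)"
  using assms Lsp_add[OF assms(2,3)]
  unfolding is_der_def hom_der_def by (auto simp: algebra_simps)

lemma is_der_smult:
  assumes "is_der Gam s d" "x \<in> Lsp Gam s"
  shows "d (\<lambda>b. c * x b) = (\<lambda>z. c * d x z)"
  using assms Lsp_smult[OF assms(2)]
  unfolding is_der_def hom_der_def by (auto simp: distrib_left)

lemma is_der_finite_supp:
  assumes "is_der Gam s d" "x \<in> Lsp Gam s"
  shows "finite (supp (d x))"
proof -
  obtain d1 d2 where "hom_der Gam s 0 d1" "hom_der Gam s 1 d2" "d x = (\<lambda>z. d1 x z + d2 x z)"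
    using assms unfolding is_der_def by blast
  then show ?thesis
    using hom_der_finite_supp assms(2) supp_add[of "d1 x" "d2 x"] by (metis finite_UnI finite_subset)
qed

lemma is_der_shift_coordinates:
  assumes der: "is_der Gam s d" and Gam: "nontriv_subgroup Gam"
    and m: "m \<in> Gam" "d (sc 1 (L m)) = (\<lambda>_. 0)" and Y: "is_basis Gam s Y"
  shows "of_real (Lcoef m Y) * d (sc 1 (shift m Y)) (x, y)
      = of_real (Lcoef m (shift (- m) x)) * d (sc 1 Y) (shift (- m) x, y)
      + of_real (Lcoef m (shift (- m) y)) * d (sc 1 Y) (x, shift (- m) y)"
proof -
  let ?x = "sc 1 (L m)" and ?y = "sc 1 Y"
  obtain d1 d2 where h1: "hom_der Gam s 0 d1" and h2: "hom_der Gam s 1 d2"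
    and dd: "\<And>x. x \<in> Lsp Gam s \<Longrightarrow> d x = (\<lambda>z. d1 x z + d2 x z)"
    using der unfolding is_der_def by blast
  have xL: "?x \<in> Lsp Gam s" using m(1) by (intro sc_in_Lsp) simp
  have yL: "?y \<in> Lsp Gam s" using Y by (rule sc_in_Lsp)
  have Y': "is_basis Gam s (shift m Y)" using is_basis_shift[OF Gam Y m(1)] .
  have xh: "Lhom ?x 0" and yh: "Lhom ?y (par Y)"
    by (simp_all add: Lhom_def)
  have py: "par Y < 2"
    by (cases Y) simp_all
  txt \<open>\<open>L\<^sub>m\<close> is even, so \<open>d1\<close> and \<open>d2\<close> send it to opposite parities and both must vanish.\<close>
  have "Vhom (d1 ?x) 0" "Vhom (d2 ?x) 1"
    using hom_der_Vhom[OF h1 xL xh] hom_der_Vhom[OF h2 xL xh] by simp_all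
  moreover have "(\<lambda>z. d1 ?x z + d2 ?x z) = (\<lambda>_. 0)"
    using dd[OF xL] m(2) by simp
  ultimately have d1x: "d1 ?x = (\<lambda>_. 0)" and d2x: "d2 ?x = (\<lambda>_. 0)"
    using Vhom_sum_zero by simp_all
  have fin: "finite (supp (d1 ?y))" "finite (supp (d2 ?y))"
    using hom_der_finite_supp[OF h1 yL] hom_der_finite_supp[OF h2 yL] .
  have brk: "brk ?x ?y = (\<lambda>b. of_real (Lcoef m Y) * sc 1 (shift m Y) b)"
    unfolding brk_sc1 bb_L by (auto simp: sc_def)
  have brkL: "brk ?x ?y \<in> Lsp Gam s"
    unfolding brk_sc1 bb_L using Y' by (rule sc_in_Lsp)
  have "of_real (Lcoef m Y) * d (sc 1 (shift m Y)) (x, y) = d (brk ?x ?y) (x, y)"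
    unfolding brk is_der_smult[OF der sc_in_Lsp[OF Y']] ..
  also have "\<dots> = act ?x (d1 ?y) (x, y) + act ?x (d2 ?y) (x, y)"
    unfolding dd[OF brkL] hom_der_bracket_annihilated[OF h1 xL yL xh yh py d1x]
      hom_der_bracket_annihilated[OF h2 xL yL xh yh py d2x] ..
  also have "\<dots> = of_real (Lcoef m (shift (- m) x)) * d ?y (shift (- m) x, y)
      + of_real (Lcoef m (shift (- m) y)) * d ?y (x, shift (- m) y)"
    unfolding act_L[OF fin(1)] act_L[OF fin(2)] dd[OF yL] by (simp add: algebra_simps)
  finally show ?thesis .
qed

lemma is_der_basis_zero:
  assumes der: "is_der Gam s d" and Gam: "nontriv_subgroup Gam" "\<epsilon> \<in> Gam" "\<epsilon> \<noteq> 0"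
    and ann: "\<And>k::int. d (sc 1 (L (of_int k * \<epsilon>))) = (\<lambda>_. 0)"
    and X: "is_basis Gam s X"
  shows "d (sc 1 X) = (\<lambda>_. 0)"
proof
  fix z :: "gen \<times> gen"
  obtain a b where z: "z = (a, b)" by fastforce
  define v where "v = d (sc 1 X)"
  define bad where "bad = {m. cross_coef X a b m = 0} \<union> {m. (shift m a, shift (- m) b) \<in> supp v}
      \<union> {m. (shift (- m) a, shift m b) \<in> supp v}"
  have "finite (supp v)"
    unfolding v_def using is_der_finite_supp[OF der sc_in_Lsp[OF X]] .
  then have "finite bad"
    unfolding bad_def
    using finite_cross_coef_roots finite_vimageI[OF _ inj_shift_fst, of "supp v" a "\<lambda>m. shift (- m) b"]
      finite_vimageI[OF _ inj_shift_snd, of "supp v" "\<lambda>m. shift (- m) a" b]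
    by (simp add: vimage_def)
  then obtain k :: int where "of_int k * \<epsilon> \<notin> bad"
    using ex_int_mult_notin[OF _ Gam(3)] by blast
  then obtain m where m_bad: "m \<notin> bad" and m_def: "m = of_int k * \<epsilon>"
    by blast
  then have Q: "cross_coef X a b m \<noteq> 0"
    and v_up: "v (shift m a, shift (- m) b) = 0" and v_down: "v (shift (- m) a, shift m b) = 0"
    unfolding bad_def supp_def by auto
  have m: "m \<in> Gam" "d (sc 1 (L m)) = (\<lambda>_. 0)"
    using nontriv_subgroup_int_mult[OF Gam(1,2)] ann unfolding m_def by auto
  have m': "- m \<in> Gam" "d (sc 1 (L (- m))) = (\<lambda>_. 0)"
    using nontriv_subgroup_int_mult[OF Gam(1,2), of "- k"] ann[of "- k"] unfolding m_def by auto
  have X': "is_basis Gam s (shift m X)" using is_basis_shift[OF Gam(1) X m(1)] .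
  define w where "w = d (sc 1 (shift m X))"
  have down: "of_real (Lcoef (- m) (shift m X)) * v (a, b)
      = of_real (Lcoef (- m) (shift m a)) * w (shift m a, b)
      + of_real (Lcoef (- m) (shift m b)) * w (a, shift m b)"
    using is_der_shift_coordinates[OF der Gam(1) m' X', of a b] unfolding v_def w_def by simp
  have up_a: "of_real (Lcoef m X) * w (shift m a, b) = of_real (Lcoef m a) * v (a, b)"
    using is_der_shift_coordinates[OF der Gam(1) m X, of "shift m a" b] v_up
    unfolding v_def w_def by simp
  have up_b: "of_real (Lcoef m X) * w (a, shift m b) = of_real (Lcoef m b) * v (a, b)"
    using is_der_shift_coordinates[OF der Gam(1) m X, of a "shift m b"] v_down
    unfolding v_def w_def by simp
  have "of_real (cross_coef X a b m) * v (a, b) = 0"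
    using cross_cancel[OF down up_a up_b] by (simp add: cross_coef_def)
  with Q show "d (sc 1 X) z = 0"
    unfolding z v_def by simp
qed

lemma is_der_zero_on_Lsp:
  assumes der: "is_der Gam s d" and basis: "\<And>g. is_basis Gam s g \<Longrightarrow> d (sc 1 g) = (\<lambda>_. 0)"
    and x: "x \<in> Lsp Gam s"
  shows "d x = (\<lambda>_. 0)"
proof -
  have "d x = (\<lambda>_. 0)" if "finite S" "x \<in> Lsp Gam s" "supp x = S" for S x
    using that
  proof (induction S arbitrary: x rule: finite_induct)
    case empty
    then have "x = (\<lambda>b. 0 * x b)" by (auto simp: supp_def)
    then show ?case using is_der_smult[OF der empty.prems(1), of 0] by simp
  next
    case (insert g S)
    define x' where "x' = (\<lambda>h. if h = g then 0 else x h)"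
    have g: "is_basis Gam s g"
      using insert.prems unfolding Lsp_def by auto
    have x': "x' \<in> Lsp Gam s" "supp x' = S"
      using insert.hyps(2) insert.prems unfolding Lsp_def x'_def supp_def
      by (auto elim: finite_subset[rotated])
    then have "d x' = (\<lambda>_. 0)" using insert.IH by blast
    have "x = (\<lambda>h. x' h + x g * sc 1 g h)"
      unfolding x'_def sc_def by auto
    then have "d x = d (\<lambda>h. x' h + x g * sc 1 g h)"
      by (rule arg_cong)
    also have "\<dots> = (\<lambda>z. d x' z + d (\<lambda>h. x g * sc 1 g h) z)"
      by (rule is_der_add[OF der x'(1) Lsp_smult[OF sc_in_Lsp[OF g, of 1]]])
    also have "\<dots> = (\<lambda>_. 0)"
      using \<open>d x' = (\<lambda>_. 0)\<close> is_der_smult[OF der sc_in_Lsp[OF g], of "x g"] basis[OF g] by simp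
    finally show ?case .
  qed
  then show ?thesis
    using x unfolding Lsp_def by blast
qed

theorem mainTheorem11:
  fixes Gam :: "real set" and s \<epsilon> :: real and d :: "elt \<Rightarrow> velt"
  assumes "nontriv_subgroup Gam"
    and "2 * s \<in> Gam"
    and "\<epsilon> \<in> Gam" and "\<epsilon> > 0"
    and "d \<in> Der0 Gam s"
    and "\<forall>k::int. d (sc 1 (L (of_int k * \<epsilon>))) = (\<lambda>_. 0)"
  shows "(\<forall>p\<in>Gam. d (sc 1 (L p)) = (\<lambda>_. 0) \<and> d (sc 1 (I p)) = (\<lambda>_. 0))
       \<and> (\<forall>r. r - s \<in> Gam \<longrightarrow> d (sc 1 (G r)) = (\<lambda>_. 0) \<and> d (sc 1 (H r)) = (\<lambda>_. 0))
       \<and> (\<forall>x\<in>Lsp Gam s. d x = (\<lambda>_. 0))"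
proof -
  have der: "is_der Gam s d"
    using assms(5) by (simp add: Der0_def)
  have basis: "d (sc 1 g) = (\<lambda>_. 0)" if "is_basis Gam s g" for g
    using is_der_basis_zero[OF der assms(1,3)] assms(4,6) that by simp
  show ?thesis
    by (intro conjI ballI allI impI basis is_der_zero_on_Lsp[OF der basis]) simp_all
qed

end
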